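(* Assume that $d_k < \sqrt{2}\,(p_k)^{1/2}$ for every integer $k\geq 1$ with $k\neq 4$. Then for every $n\geq 1$, $p_{n+2} < (p_n+1) + 2\sqrt2\,(p_n)^{1/2}$; that is, there are at least two primes greater than $p_n$ and less than $p_n + 1 + 2\sqrt{2p_n} = (\sqrt{p_n}+\sqrt2)^2 - 1$.
   Context: $p_k$ denotes the $k$th prime ($p_1=2$) and $d_k := p_{k+1}-p_k$. *)

theory Defs
  imports "HOL-Computational_Algebra.Primes" Complex_Main
begin

text \<open>The k-th prime, 1-indexed: pr 1 = 2, pr 2 = 3, ... . It is the least prime p
  such that exactly k primes are \<le> p. (pr 0 is a junk value and never used.)\<close>
definition pr :: "nat \<Rightarrow> nat" where
  "pr k = (LEAST p. prime p \<and> card {q. prime q \<and> q \<le> p} = k)"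

definition dgap :: "nat \<Rightarrow> nat" where
  "dgap k = pr (Suc k) - pr k"

end

theory Submission
  imports Defs
begin

text \<open>Write \<open>x = sqrt (2 p\<^sub>n)\<close>. The hypothesis gives \<open>p\<^sub>n\<^sub>+\<^sub>1 < p\<^sub>n + x\<close>, hence
  \<open>2 p\<^sub>n\<^sub>+\<^sub>1 < x\<^sup>2 + 2 x < (x + 1)\<^sup>2\<close>, so applying the hypothesis once more gives
  \<open>d\<^sub>n\<^sub>+\<^sub>1 < x + 1\<close> and \<open>p\<^sub>n\<^sub>+\<^sub>2 < p\<^sub>n + 1 + 2 x\<close>.\<close>

definition prime_count :: "nat \<Rightarrow> nat" where
  "prime_count m = card {q. prime q \<and> q \<le> m}"

lemma pr_altdef: "pr k = (LEAST p. prime p \<and> prime_count p = k)"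
  unfolding pr_def prime_count_def ..

lemma prime_count_mono: "m \<le> m' \<Longrightarrow> prime_count m \<le> prime_count m'"
  unfolding prime_count_def by (rule card_mono) auto

lemma prime_count_less:
  assumes "prime p" "m < p"
  shows "prime_count m < prime_count p"
  unfolding prime_count_def
proof (rule psubset_card_mono)
  have "p \<notin> {q. prime q \<and> q \<le> m}" using assms(2) by simp
  moreover have "{q. prime q \<and> q \<le> m} \<subseteq> {q. prime q \<and> q \<le> p}" using assms(2) by auto
  ultimately show "{q. prime q \<and> q \<le> m} \<subset> {q. prime q \<and> q \<le> p}"
    using assms(1) by blast
qed simp

lemma prime_count_0 [simp]: "prime_count 0 = 0"
proof -
  have "{q :: nat. prime q \<and> q \<le> 0} = {}" by auto
  then show ?thesis unfolding prime_count_def by simp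
qed

lemma prime_count_Suc:
  "prime_count (Suc m) = prime_count m + (if prime (Suc m) then 1 else 0)"
proof -
  have "{q. prime q \<and> q \<le> Suc m} =
      {q. prime q \<and> q \<le> m} \<union> (if prime (Suc m) then {Suc m} else {})"
    by (auto simp: le_Suc_eq)
  then show ?thesis
    unfolding prime_count_def by (simp add: card_insert_if)
qed

lemma prime_count_unbounded: "\<exists>m. k \<le> prime_count m"
proof (induction k)
  case (Suc k)
  then obtain m where "k \<le> prime_count m" by blast
  moreover obtain p where "prime p" "m < p" using bigger_prime by blast
  ultimately have "Suc k \<le> prime_count p" using prime_count_less[of p m] by simp
  then show ?case ..
qed simp

text \<open>The least \<open>m\<close> with \<open>k \<le> prime_count m\<close> is a jump point of \<open>prime_count\<close>, hence prime.\<close>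
lemma ex_prime_count_eq:
  assumes "k \<ge> 1"
  shows "\<exists>p. prime p \<and> prime_count p = k"
proof -
  define m where "m = (LEAST m. k \<le> prime_count m)"
  have k_le: "k \<le> prime_count m"
    unfolding m_def using prime_count_unbounded by (rule LeastI_ex)
  then obtain j where j: "m = Suc j"
    using assms by (cases m) auto
  have "\<not> k \<le> prime_count j"
    using not_less_Least[of j "\<lambda>m. k \<le> prime_count m"] unfolding m_def[symmetric] j by simp
  with k_le have "prime m \<and> prime_count m = k"
    using prime_count_Suc[of j] unfolding j by (cases "prime (Suc j)") simp_all
  then show ?thesis ..
qed

lemma prime_count_pr:
  assumes "k \<ge> 1"
  shows "prime_count (pr k) = k"
  using LeastI_ex[OF ex_prime_count_eq[OF assms]] unfolding pr_altdef by simp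

lemma pr_eqI:
  assumes "prime p" "prime_count p = k"
  shows "pr k = p"
  unfolding pr_altdef
proof (rule Least_equality)
  fix q assume "prime q \<and> prime_count q = k"
  then show "p \<le> q"
    using assms prime_count_less[of p q] by (cases "q < p") auto
qed (use assms in simp)

lemma pr_less_pr_Suc:
  assumes "k \<ge> 1"
  shows "pr k < pr (Suc k)"
proof (rule ccontr)
  assume "\<not> pr k < pr (Suc k)"
  then have "prime_count (pr (Suc k)) \<le> prime_count (pr k)"
    by (simp add: prime_count_mono)
  then show False
    using prime_count_pr[OF assms] prime_count_pr[of "Suc k"] by simp
qed

lemma dgap_real:
  assumes "k \<ge> 1"
  shows "real (dgap k) = real (pr (Suc k)) - real (pr k)"
  using pr_less_pr_Suc[OF assms] unfolding dgap_def by (simp add: of_nat_diff)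

lemma prime_count_eq_length: "prime_count m = length (filter prime [0..<Suc m])"
proof -
  have "{q. prime q \<and> q \<le> m} = set (filter prime [0..<Suc m])"
    by (auto simp del: upt_Suc)
  then show ?thesis
    unfolding prime_count_def by (metis distinct_card distinct_filter distinct_upt)
qed

lemma pr_3: "pr 3 = 5"
  by (rule pr_eqI[unfolded prime_count_eq_length]; code_simp)

lemma pr_4: "pr 4 = 7"
  by (rule pr_eqI[unfolded prime_count_eq_length]; code_simp)

lemma pr_5: "pr 5 = 11"
  by (rule pr_eqI[unfolded prime_count_eq_length]; code_simp)

lemma pr_6: "pr 6 = 13"
  by (rule pr_eqI[unfolded prime_count_eq_length]; code_simp)

lemma two_gaps_bound:
  fixes a b c :: real
  assumes "0 \<le> a" "b - a < sqrt (2 * a)" "c - b < sqrt (2 * b)"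
  shows "c < a + 1 + 2 * sqrt (2 * a)"
proof -
  define x where "x = sqrt (2 * a)"
  have "x\<^sup>2 = 2 * a" "0 \<le> x"
    using assms(1) by (simp_all add: x_def)
  with assms(2) have "2 * b < (x + 1)\<^sup>2"
    unfolding x_def[symmetric] by (simp add: power2_eq_square algebra_simps)
  then have "sqrt (2 * b) < x + 1"
    using \<open>0 \<le> x\<close> by (intro real_less_lsqrt) simp_all
  with assms(2,3) show ?thesis
    unfolding x_def by linarith
qed

theorem theorem2p14:
  assumes "\<And>k. k \<ge> 1 \<Longrightarrow> k \<noteq> 4 \<Longrightarrow> real (dgap k) < sqrt 2 * sqrt (real (pr k))"
    and "n \<ge> 1"
  shows "real (pr (n + 2)) < (real (pr n) + 1) + 2 * sqrt 2 * sqrt (real (pr n))"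
proof -
  have sqrt_2: "sqrt 2 * sqrt (real m) = sqrt (2 * real m)" for m
    by (simp add: real_sqrt_mult)
  consider "n = 3" | "n = 4" | "n \<noteq> 3" "n \<noteq> 4" by blast
  then have "real (pr (n + 2)) < real (pr n) + 1 + 2 * sqrt (2 * real (pr n))"
  proof cases
    case 1
    have "5 / 2 < sqrt (10 :: real)" by (rule real_less_rsqrt) (simp add: power2_eq_square)
    then show ?thesis using 1 pr_3 pr_5 by simp
  next
    case 2
    have "5 / 2 < sqrt (14 :: real)" by (rule real_less_rsqrt) (simp add: power2_eq_square)
    then show ?thesis using 2 pr_4 pr_6 by simp
  next
    case 3
    then show ?thesis
      using assms(1)[of n] assms(1)[of "Suc n"] \<open>n \<ge> 1\<close>
      by (intro two_gaps_bound) (simp_all add: dgap_real sqrt_2)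
  qed
  then show ?thesis
    by (simp add: sqrt_2 mult.assoc)
qed

end
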